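(* Let $G$ be the $m\times n$ grid with $m,n\ge 2$. Every minimal landmark set $L$ of $G$ satisfies either $|L|\in\{2,3\}$, or $|L|$ is even and $4\le |L|\le 2\min\{m,n\}-2$.
   Context: The $m\times n$ grid $G$ has vertex set $V=\{(i,j):1\le i\le m,\ 1\le j\le n\}$, with $(i_1,j_1),(i_2,j_2)$ adjacent iff $|i_1-i_2|+|j_1-j_2|=1$; thus $d((i_1,j_1),(i_2,j_2))=|i_1-i_2|+|j_1-j_2|$. A vertex $x$ separates $u,v$ if $d(x,u)\neq d(x,v)$. A landmark set is $L\subseteq V$ such that every pair of distinct vertices is separated by some vertex of $L$; it is minimal if no proper subset of it is a landmark set. *)

theory Defs
  imports Main
begin

definition grid_vertices :: "nat \<Rightarrow> nat \<Rightarrow> (nat \<times> nat) set" where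
  "grid_vertices m n = {(i, j). 1 \<le> i \<and> i \<le> m \<and> 1 \<le> j \<and> j \<le> n}"

definition grid_dist :: "nat \<times> nat \<Rightarrow> nat \<times> nat \<Rightarrow> nat" where
  "grid_dist u v = nat (\<bar>int (fst u) - int (fst v)\<bar> + \<bar>int (snd u) - int (snd v)\<bar>)"

definition separates :: "nat \<times> nat \<Rightarrow> nat \<times> nat \<Rightarrow> nat \<times> nat \<Rightarrow> bool" where
  "separates x u v \<longleftrightarrow> grid_dist x u \<noteq> grid_dist x v"

definition landmark_set :: "nat \<Rightarrow> nat \<Rightarrow> (nat \<times> nat) set \<Rightarrow> bool" where
  "landmark_set m n L \<longleftrightarrow> L \<subseteq> grid_vertices m n \<and>
     (\<forall>u\<in>grid_vertices m n. \<forall>v\<in>grid_vertices m n. u \<noteq> v \<longrightarrow> (\<exists>x\<in>L. separates x u v))"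

definition minimal_landmark_set :: "nat \<Rightarrow> nat \<Rightarrow> (nat \<times> nat) set \<Rightarrow> bool" where
  "minimal_landmark_set m n L \<longleftrightarrow> landmark_set m n L \<and> (\<forall>L'. L' \<subset> L \<longrightarrow> \<not> landmark_set m n L')"

end

theory Submission
  imports Defs
begin

(*
  For a landmark set L of the m x n grid, the row cuts {x : fst x <= i} (0 < i < m) and the column
  cuts {x : snd x <= j} (0 < j < n) are two chains of subsets of L.  The vertices (i, j+1), (i+1, j)
  are separated exactly by the landmarks x with (fst x <= i) ~= (snd x <= j), and (i, j), (i+1, j+1)
  by the remaining ones, so no row cut equals a column cut or its complement.  Conversely, any two
  vertices are separated by every vertex outside the diagonal (or the antidiagonal) quadrants of
  some cut (i, j), or outside some interior row or column.  Hence in a minimal landmark set with at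
  least four elements every landmark x is isolated by a row cut R and a column cut C: the symmetric
  difference of R and C is {x} or L - {x}.

  If |L| >= 4, a fixed row cut
  paired with the column cuts isolates at most two landmarks, so |L| <= 2(m - 1), and by
  transposition |L| <= 2(n - 1).  For the parity, call a pair of proper cuts adjacent if they
  differ in exactly one landmark and coadjacent if they agree in exactly one.  When |L| >= 5 the
  two kinds cannot both occur, so after complementing the column cuts, and possibly exchanging
  the two chains, all isolating pairs of proper cuts are adjacent.  Such a pair is determined by
  its level min(|R|, |C|); all levels 1, ..., |L| - 2 occur, consecutive levels alternate between
  R < C and C < R, the lowest level has R < C and the highest C < R.  Hence |L| - 2 is even.
*)

section \<open>Two chains of cuts\<close>

lemma chain_subset_card_le:
  assumes "chain\<^sub>\<subseteq> F" "A \<in> F" "B \<in> F" "finite A" "card A \<le> card B"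
  shows "A \<subseteq> B"
proof -
  have "A \<subseteq> B \<or> B \<subseteq> A" using assms(1-3) by (auto simp: chain_subset_def)
  then show ?thesis using assms(4,5) by (metis card_mono card_subset_eq le_antisym)
qed

lemma union_eq_of_card_Suc:
  assumes "finite X" "A \<subseteq> X" "B \<subseteq> X" "card A = card B" "A \<noteq> B" "card X = Suc (card A)"
  shows "A \<union> B = X"
proof -
  have fin: "finite A" "finite B" using assms(1-3) finite_subset by blast+
  have "\<not> B \<subseteq> A" using fin assms(4,5) card_subset_eq by metis
  then have "card A < card (A \<union> B)" using fin by (intro psubset_card_mono) auto
  moreover have "card (A \<union> B) \<le> card X" using assms(1-3) by (intro card_mono) auto
  ultimately show ?thesis using assms(1-3,6) by (intro card_subset_eq) auto
qed

lemma card_le_4_of_cover: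
  assumes "L \<subseteq> {x, y} \<union> S \<union> S'" "finite S" "finite S'" "card S \<le> 1" "card S' \<le> 1"
  shows "card L \<le> 4"
proof -
  have "card L \<le> card ({x, y} \<union> S \<union> S')" using assms(1-3) by (intro card_mono) auto
  also have "\<dots> \<le> card {x, y} + card S + card S'"
    using card_Un_le[of "{x, y}" S] card_Un_le[of "{x, y} \<union> S" S'] by linarith
  also have "\<dots> \<le> 4" using assms(4,5) by (simp add: card_insert_if)
  finally show ?thesis .
qed

lemma sym_diff_compl_both: "R \<subseteq> L \<Longrightarrow> C \<subseteq> L \<Longrightarrow> sym_diff (L - R) (L - C) = sym_diff R C"
  by blast

lemma sym_diff_compl_right: "R \<subseteq> L \<Longrightarrow> C \<subseteq> L \<Longrightarrow> sym_diff R (L - C) = L - sym_diff R C"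
  by blast

lemma sym_diff_filter: "sym_diff {x \<in> L. P x} {x \<in> L. Q x} = {x \<in> L. P x \<noteq> Q x}"
  by blast

lemma sym_diff_singleton_cases:
  assumes "sym_diff R C = {z}"
  obtains (rising) "z \<notin> R" "C = insert z R" | (falling) "z \<notin> C" "R = insert z C"
proof -
  have agree: "w \<in> R \<longleftrightarrow> w \<in> C" if "w \<noteq> z" for w using assms that by blast
  have z: "z \<in> R \<longleftrightarrow> z \<notin> C" using assms by blast
  show ?thesis
  proof (cases "z \<in> R")
    case True
    then have "R = insert z C" using z agree by (intro set_eqI) (metis insert_iff)
    then show ?thesis using True z falling by blast
  next
    case False
    then have "C = insert z R" using z agree by (intro set_eqI) (metis insert_iff)
    then show ?thesis using False rising by blast
  qed
qed

lemma card_le_1_if_unique: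
  assumes "finite A" "\<And>a b. a \<in> A \<Longrightarrow> b \<in> A \<Longrightarrow> a = b"
  shows "card A \<le> 1"
  using card_le_Suc0_iff_eq[OF assms(1)] assms(2) by simp

definition isolates :: "'a set \<Rightarrow> 'a set \<Rightarrow> 'a set \<Rightarrow> 'a \<Rightarrow> bool" where
  "isolates L R C x \<longleftrightarrow> sym_diff R C = {x} \<or> sym_diff R C = L - {x}"

lemma isolates_sym: "isolates L C R x = isolates L R C x"
  unfolding isolates_def by (simp add: Un_commute)

lemma isolates_other_point:
  assumes "isolates L R C y" "y' \<in> L" "y' \<noteq> y"
  shows "y' \<in> sym_diff R C \<longleftrightarrow> y \<notin> sym_diff R C"
  using assms unfolding isolates_def by blast

lemma isolates_pointwise:
  assumes "R \<subseteq> L" "C \<subseteq> L" "isolates L R C x"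
  obtains p where "\<And>w. w \<in> L \<Longrightarrow> (w \<in> C) = ((w \<in> R) = ((w = x) = p))"
proof -
  consider "sym_diff R C = {x}" | "sym_diff R C = L - {x}" using assms(3) unfolding isolates_def
    by blast
  then show ?thesis
  proof cases
    case 1
    then have "w \<in> sym_diff R C \<longleftrightarrow> w = x" for w by simp
    then show ?thesis by (intro that[of False]) blast
  next
    case 2
    then have "w \<in> sym_diff R C \<longleftrightarrow> w \<noteq> x" if "w \<in> L" for w using that by simp
    then show ?thesis using assms(1,2) by (intro that[of True]) blast
  qed
qed

(* Restricted to four points, each Cx, Cy, Cz is determined by R and one bit, so the claim
   becomes a propositional tautology. *)

lemma no_three_isolated_by_chain:
  assumes sub: "R \<subseteq> L" "Cx \<subseteq> L" "Cy \<subseteq> L" "Cz \<subseteq> L"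
    and pts: "x \<in> L" "y \<in> L" "z \<in> L" "v \<in> L" "distinct [x, y, z, v]"
    and iso: "isolates L R Cx x" "isolates L R Cy y" "isolates L R Cz z"
    and chain: "chain\<^sub>\<subseteq> {Cx, Cy, Cz}"
  shows False
proof -
  obtain px where px: "\<And>w. w \<in> L \<Longrightarrow> (w \<in> Cx) = ((w \<in> R) = ((w = x) = px))"
    using isolates_pointwise[OF sub(1,2) iso(1)] by blast
  obtain py where py: "\<And>w. w \<in> L \<Longrightarrow> (w \<in> Cy) = ((w \<in> R) = ((w = y) = py))"
    using isolates_pointwise[OF sub(1,3) iso(2)] by blast
  obtain pz where pz: "\<And>w. w \<in> L \<Longrightarrow> (w \<in> Cz) = ((w \<in> R) = ((w = z) = pz))"
    using isolates_pointwise[OF sub(1,4) iso(3)] by blast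
  have "\<forall>w\<in>{x, y, z, v}. (w \<in> Cx) = ((w \<in> R) = ((w = x) = px))"
    "\<forall>w\<in>{x, y, z, v}. (w \<in> Cy) = ((w \<in> R) = ((w = y) = py))"
    "\<forall>w\<in>{x, y, z, v}. (w \<in> Cz) = ((w \<in> R) = ((w = z) = pz))"
    using px py pz pts by auto
  moreover have "x \<noteq> y" "y \<noteq> x" "x \<noteq> z" "z \<noteq> x" "x \<noteq> v" "v \<noteq> x"
    "y \<noteq> z" "z \<noteq> y" "y \<noteq> v" "v \<noteq> y" "z \<noteq> v" "v \<noteq> z"
    using pts(5) by auto
  moreover have "(\<forall>w\<in>{x, y, z, v}. w \<in> A \<longrightarrow> w \<in> B) \<or> (\<forall>w\<in>{x, y, z, v}. w \<in> B \<longrightarrow> w \<in> A)"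
    if "A \<in> {Cx, Cy, Cz}" "B \<in> {Cx, Cy, Cz}" for A B
    using chain that unfolding chain_subset_def by blast
  note nested = this[of Cx Cy] this[of Cx Cz] this[of Cy Cz]
  ultimately show False by simp argo
qed

lemma card_isolated_by_row_le_2:
  assumes fin: "finite L" and four: "4 \<le> card L"
    and chain: "chain\<^sub>\<subseteq> CC" and sub: "\<And>C. C \<in> CC \<Longrightarrow> C \<subseteq> L" "R \<subseteq> L"
  shows "card {x \<in> L. \<exists>C\<in>CC. isolates L R C x} \<le> 2"
proof (rule ccontr)
  define E where "E = {x \<in> L. \<exists>C\<in>CC. isolates L R C x}"
  assume "\<not> ?thesis"
  then have "3 \<le> card E" unfolding E_def by simp
  then obtain S where S: "S \<subseteq> E" "card S = 3" by (rule obtain_subset_with_card_n)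
  then obtain x y z where xyz: "S = {x, y, z}" "x \<noteq> y" "y \<noteq> z" "x \<noteq> z"
    by (auto simp: card_3_iff)
  then have "x \<in> E" "y \<in> E" "z \<in> E" using S(1) by auto
  then obtain Cx Cy Cz where C: "Cx \<in> CC" "Cy \<in> CC" "Cz \<in> CC"
    and iso: "isolates L R Cx x" "isolates L R Cy y" "isolates L R Cz z"
    and pts: "x \<in> L" "y \<in> L" "z \<in> L"
    unfolding E_def by blast
  have "\<not> L \<subseteq> {x, y, z}"
  proof
    assume "L \<subseteq> {x, y, z}"
    then have "card L \<le> card {x, y, z}" by (intro card_mono) auto
    then show False using S(2) xyz(1) four by simp
  qed
  then obtain v where v: "v \<in> L" "v \<notin> {x, y, z}" by blast
  have "chain\<^sub>\<subseteq> {Cx, Cy, Cz}" using chain C unfolding chain_subset_def by blast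
  then show False
    using no_three_isolated_by_chain[OF sub(2) sub(1)[OF C(1)] sub(1)[OF C(2)] sub(1)[OF C(3)]
        pts v(1) _ iso] xyz v(2) by auto
qed

definition level :: "'a set \<Rightarrow> 'a set \<Rightarrow> nat" where
  "level R C = min (card R) (card C)"

(* RR and CC abstract the row cuts and the column cuts of a landmark set L (see row_cuts and
   col_cuts below). *)

locale cut_chains =
  fixes L :: "'a set" and RR CC :: "'a set set"
  assumes finite_L: "finite L"
    and row_subset: "R \<in> RR \<Longrightarrow> R \<subseteq> L"
    and col_subset: "C \<in> CC \<Longrightarrow> C \<subseteq> L"
    and chain_rows: "chain\<^sub>\<subseteq> RR"
    and chain_cols: "chain\<^sub>\<subseteq> CC"
    and row_ne_col: "R \<in> RR \<Longrightarrow> C \<in> CC \<Longrightarrow> R \<noteq> C"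
    and row_ne_compl_col: "R \<in> RR \<Longrightarrow> C \<in> CC \<Longrightarrow> R \<noteq> L - C"
begin

definition proper :: "'a set \<Rightarrow> bool" where
  "proper A \<longleftrightarrow> A \<noteq> {} \<and> A \<noteq> L"

definition adjacent :: "'a set \<Rightarrow> 'a set \<Rightarrow> 'a \<Rightarrow> bool" where
  "adjacent R C z \<longleftrightarrow> R \<in> RR \<and> C \<in> CC \<and> proper R \<and> proper C \<and> sym_diff R C = {z}"

definition coadjacent :: "'a set \<Rightarrow> 'a set \<Rightarrow> 'a \<Rightarrow> bool" where
  "coadjacent R C z \<longleftrightarrow> R \<in> RR \<and> C \<in> CC \<and> proper R \<and> proper C \<and> sym_diff R C = L - {z}"

lemma finite_row: "R \<in> RR \<Longrightarrow> finite R"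
  using row_subset finite_L finite_subset by blast

lemma finite_col: "C \<in> CC \<Longrightarrow> finite C"
  using col_subset finite_L finite_subset by blast

lemma rows_nested: "R \<in> RR \<Longrightarrow> R' \<in> RR \<Longrightarrow> R \<subseteq> R' \<or> R' \<subseteq> R"
  using chain_rows by (auto simp: chain_subset_def)

lemma cols_nested: "C \<in> CC \<Longrightarrow> C' \<in> CC \<Longrightarrow> C \<subseteq> C' \<or> C' \<subseteq> C"
  using chain_cols by (auto simp: chain_subset_def)

lemma row_le: "R \<in> RR \<Longrightarrow> R' \<in> RR \<Longrightarrow> card R \<le> card R' \<Longrightarrow> R \<subseteq> R'"
  using chain_subset_card_le[OF chain_rows] finite_row by blast

lemma col_le: "C \<in> CC \<Longrightarrow> C' \<in> CC \<Longrightarrow> card C \<le> card C' \<Longrightarrow> C \<subseteq> C'"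
  using chain_subset_card_le[OF chain_cols] finite_col by blast

lemma row_eq: "R \<in> RR \<Longrightarrow> R' \<in> RR \<Longrightarrow> card R = card R' \<Longrightarrow> R = R'"
  using row_le[of R R'] row_le[of R' R] by auto

lemma col_eq: "C \<in> CC \<Longrightarrow> C' \<in> CC \<Longrightarrow> card C = card C' \<Longrightarrow> C = C'"
  using col_le[of C C'] col_le[of C' C] by auto

lemma sym_diff_row_col_nonempty: "R \<in> RR \<Longrightarrow> C \<in> CC \<Longrightarrow> sym_diff R C \<noteq> {}"
  using row_ne_col by blast

lemma sym_diff_row_col_ne_all: "R \<in> RR \<Longrightarrow> C \<in> CC \<Longrightarrow> sym_diff R C \<noteq> L"
  using row_ne_compl_col row_subset col_subset by blast

lemma trivial_row_imp_proper_cols: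
  assumes "{} \<in> RR \<or> L \<in> RR"
  shows "{} \<notin> CC" "L \<notin> CC"
  using assms row_ne_col row_ne_compl_col by fastforce+

lemma card_singleton_rows_le_1: "card {w \<in> L. {w} \<in> RR} \<le> 1"
proof (rule card_le_1_if_unique)
  fix a b assume "a \<in> {w \<in> L. {w} \<in> RR}" "b \<in> {w \<in> L. {w} \<in> RR}"
  then show "a = b" using row_eq[of "{a}" "{b}"] by simp
qed (use finite_L in simp)

lemma card_cosingleton_rows_le_1: "card {t \<in> L. L - {t} \<in> RR} \<le> 1"
proof (rule card_le_1_if_unique)
  fix a b assume "a \<in> {t \<in> L. L - {t} \<in> RR}" "b \<in> {t \<in> L. L - {t} \<in> RR}"
  then show "a = b" using row_eq[of "L - {a}" "L - {b}"] finite_L by auto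
qed (use finite_L in simp)

lemma card_cosingleton_cols_le_1: "card {t \<in> L. L - {t} \<in> CC} \<le> 1"
proof (rule card_le_1_if_unique)
  fix a b assume "a \<in> {t \<in> L. L - {t} \<in> CC}" "b \<in> {t \<in> L. L - {t} \<in> CC}"
  then show "a = b" using col_eq[of "L - {a}" "L - {b}"] finite_L by auto
qed (use finite_L in simp)

lemma card_codoubleton_rows_le_1:
  assumes "y \<in> L"
  shows "card {z \<in> L. z \<noteq> y \<and> L - {z, y} \<in> RR} \<le> 1"
proof (rule card_le_1_if_unique)
  fix a b assume ab: "a \<in> {z \<in> L. z \<noteq> y \<and> L - {z, y} \<in> RR}" "b \<in> {z \<in> L. z \<noteq> y \<and> L - {z, y} \<in> RR}"
  then have "card (L - {a, y}) = card (L - {b, y})" using assms finite_L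
    by (simp add: card_Diff_subset)
  then have "L - {a, y} = L - {b, y}" using row_eq ab by simp
  then show "a = b" using ab by auto
qed (use finite_L in simp)

lemma adjacent_point: "adjacent R C z \<Longrightarrow> z \<in> L"
  unfolding adjacent_def using row_subset col_subset by blast

lemma coadjacent_point: "coadjacent R C z \<Longrightarrow> z \<in> L"
  using sym_diff_row_col_ne_all unfolding coadjacent_def by blast

lemma adjacent_cases:
  assumes "adjacent R C z"
  obtains (rising) "z \<notin> R" "C = insert z R" | (falling) "z \<notin> C" "R = insert z C"
proof -
  from assms have "sym_diff R C = {z}" by (simp add: adjacent_def)
  then show ?thesis by (rule sym_diff_singleton_cases) (fact that)+
qed

lemma cut_chains_transposed: "cut_chains L CC RR"
proof unfold_locales
  show "C \<noteq> R" "C \<noteq> L - R" if "C \<in> CC" "R \<in> RR" for R C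
    using that row_ne_col[of R C] row_ne_compl_col[of R C] row_subset[of R] by auto
qed (use finite_L row_subset col_subset chain_rows chain_cols in auto)

lemma cut_chains_complemented: "cut_chains L ((-) L ` RR) ((-) L ` CC)"
proof unfold_locales
  show "chain\<^sub>\<subseteq> ((-) L ` RR)" "chain\<^sub>\<subseteq> ((-) L ` CC)"
    using chain_rows chain_cols unfolding chain_subset_def by blast+
  show "R \<noteq> C" "R \<noteq> L - C" if RC: "R \<in> (-) L ` RR" "C \<in> (-) L ` CC" for R C
  proof -
    obtain R0 C0 where RC: "R0 \<in> RR" "C0 \<in> CC" "R = L - R0" "C = L - C0" using RC by blast
    then have "R0 \<subseteq> L" "C0 \<subseteq> L" using row_subset col_subset by auto
    then show "R \<noteq> C" "R \<noteq> L - C"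
      using RC row_ne_col[OF RC(1,2)] row_ne_compl_col[OF RC(1,2)]
        by (metis Diff_Diff_Int inf.absorb2)+
  qed
qed (use finite_L in auto)

lemma cut_chains_cocols: "cut_chains L RR ((-) L ` CC)"
proof unfold_locales
  show "chain\<^sub>\<subseteq> ((-) L ` CC)" using chain_cols unfolding chain_subset_def by blast
  show "R \<noteq> C" "R \<noteq> L - C" if R: "R \<in> RR" and C: "C \<in> (-) L ` CC" for R C
  proof -
    obtain C0 where C: "C0 \<in> CC" "C = L - C0" using C by blast
    then have "C0 \<subseteq> L" using col_subset by auto
    then show "R \<noteq> C" "R \<noteq> L - C"
      using C row_ne_col[OF R C(1)] row_ne_compl_col[OF R C(1)]
        by (metis Diff_Diff_Int inf.absorb2)+
  qed
qed (use finite_L row_subset chain_rows in auto)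

lemma adjacent_transposed: "cut_chains.adjacent L CC RR C R z \<longleftrightarrow> adjacent R C z"
  unfolding cut_chains.adjacent_def[OF cut_chains_transposed] adjacent_def
    cut_chains.proper_def[OF cut_chains_transposed] proper_def by (auto simp: Un_commute)

lemma coadjacent_transposed: "cut_chains.coadjacent L CC RR C R z \<longleftrightarrow> coadjacent R C z"
  unfolding cut_chains.coadjacent_def[OF cut_chains_transposed] coadjacent_def
    cut_chains.proper_def[OF cut_chains_transposed] proper_def by (auto simp: Un_commute)

lemma adjacent_complemented:
  assumes "adjacent R C z"
  shows "cut_chains.adjacent L ((-) L ` RR) ((-) L ` CC) (L - R) (L - C) z"
proof -
  have RC: "R \<in> RR" "C \<in> CC" and "R \<subseteq> L" "C \<subseteq> L"
    using assms row_subset col_subset by (auto simp: adjacent_def)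
  then show ?thesis
    using assms unfolding cut_chains.adjacent_def[OF cut_chains_complemented] adjacent_def
      cut_chains.proper_def[OF cut_chains_complemented] proper_def
    by (simp add: sym_diff_compl_both) blast
qed

lemma coadjacent_complemented:
  assumes "coadjacent R C z"
  shows "cut_chains.coadjacent L ((-) L ` RR) ((-) L ` CC) (L - R) (L - C) z"
proof -
  have RC: "R \<in> RR" "C \<in> CC" and "R \<subseteq> L" "C \<subseteq> L"
    using assms row_subset col_subset by (auto simp: coadjacent_def)
  then show ?thesis
    using assms unfolding cut_chains.coadjacent_def[OF cut_chains_complemented] coadjacent_def
      cut_chains.proper_def[OF cut_chains_complemented] proper_def
    by (simp add: sym_diff_compl_both) blast
qed

lemma coadjacent_cocols_iff:
  assumes "C \<in> CC"
  shows "cut_chains.coadjacent L RR ((-) L ` CC) R (L - C) z \<longleftrightarrow> adjacent R C z"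
proof -
  have C: "C \<subseteq> L" using assms col_subset by blast
  have sd: "sym_diff R (L - C) = L - {z} \<longleftrightarrow> sym_diff R C = {z}" if "R \<subseteq> L" "z \<in> L"
    using sym_diff_compl_right[OF that(1) C] that C by blast
  show ?thesis
  proof
    assume co: "cut_chains.coadjacent L RR ((-) L ` CC) R (L - C) z"
    then have "R \<in> RR" "z \<in> L"
      using cut_chains.coadjacent_point[OF cut_chains_cocols co]
      unfolding cut_chains.coadjacent_def[OF cut_chains_cocols] by auto
    then show "adjacent R C z"
      using co assms sd row_subset C
      unfolding cut_chains.coadjacent_def[OF cut_chains_cocols] adjacent_def
        cut_chains.proper_def[OF cut_chains_cocols] proper_def
      by simp blast
  next
    assume adj: "adjacent R C z"
    then have "R \<in> RR" "z \<in> L" using adjacent_point unfolding adjacent_def by auto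
    then show "cut_chains.coadjacent L RR ((-) L ` CC) R (L - C) z"
      using adj assms sd row_subset C
      unfolding cut_chains.coadjacent_def[OF cut_chains_cocols] adjacent_def
        cut_chains.proper_def[OF cut_chains_cocols] proper_def
      by simp blast
  qed
qed

lemma adjacent_cocols_iff:
  assumes "C \<in> CC"
  shows "cut_chains.adjacent L RR ((-) L ` CC) R (L - C) z \<longleftrightarrow> coadjacent R C z"
proof -
  interpret U: cut_chains L RR "(-) L ` CC" by (rule cut_chains_cocols)
  have "(-) L ` (-) L ` CC = CC" using col_subset by (force simp: image_image double_diff)
  moreover have "L - (L - C) = C" using assms col_subset by blast
  ultimately show ?thesis using U.coadjacent_cocols_iff[of "L - C" R z] assms by simp
qed

lemma adjacent_coadjacent_below:
  assumes adj: "adjacent R C y" and co: "coadjacent R' C' x" and "R \<subseteq> R'" "C \<subseteq> C'"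
  shows "(R = {x} \<and> C = {x, y}) \<or> (R = {x, y} \<and> C = {x})"
proof -
  have sub: "R \<subseteq> L" "C \<subseteq> L" using adj row_subset col_subset by (auto simp: adjacent_def)
  have agree: "w \<in> R \<longleftrightarrow> w \<in> C" if "w \<noteq> y" for w
    using adj that by (auto simp: adjacent_def)
  have "y \<in> R \<longleftrightarrow> y \<notin> C" using adj by (auto simp: adjacent_def)
  moreover have "w \<in> R' \<longleftrightarrow> w \<notin> C'" if "w \<in> L" "w \<noteq> x" for w
    using co that by (auto simp: coadjacent_def)
  then have "R \<subseteq> {x, y}" "C \<subseteq> {x, y}"
    using agree sub assms(3,4) by blast+
  moreover have "R \<noteq> {}" "C \<noteq> {}" using adj by (auto simp: adjacent_def proper_def)
  ultimately show ?thesis using agree[of x] by (cases "x = y") auto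
qed

lemma adjacent_coadjacent_above:
  assumes adj: "adjacent R C y" and co: "coadjacent R' C' x" and "R' \<subseteq> R" "C' \<subseteq> C"
  shows "(R = L - {x} \<and> C = L - {x, y}) \<or> (R = L - {x, y} \<and> C = L - {x})"
proof -
  interpret K: cut_chains L "(-) L ` RR" "(-) L ` CC" by (rule cut_chains_complemented)
  have "R \<subseteq> L" "C \<subseteq> L" using adj row_subset col_subset by (auto simp: adjacent_def)
  moreover have "L - R \<subseteq> L - R'" "L - C \<subseteq> L - C'" using assms(3,4) by blast+
  ultimately show ?thesis
    using K.adjacent_coadjacent_below[OF adjacent_complemented[OF adj]
        coadjacent_complemented[OF co]]
    by (metis Diff_Diff_Int inf.absorb2)
qed

lemma adjacent_coadjacent_row_below_col_above:
  assumes adj: "adjacent R C y" and co: "coadjacent R' C' x" and "R \<subseteq> R'" "C' \<subseteq> C"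
  shows "(R' = L - {y} \<and> C' = {x, y}) \<or> (R' = L - {x, y} \<and> C' = {y})"
proof -
  interpret U: cut_chains L RR "(-) L ` CC" by (rule cut_chains_cocols)
  have C: "C \<in> CC" "C' \<in> CC" using adj co by (auto simp: adjacent_def coadjacent_def)
  have "C' \<subseteq> L" "x \<in> L" "y \<in> L" using C col_subset adjacent_point[OF adj] coadjacent_point[OF co]
    by auto
  moreover have "L - C \<subseteq> L - C'" using assms(4) by blast
  ultimately show ?thesis
    using U.adjacent_coadjacent_above[of R' "L - C'" x R "L - C" y]
      adjacent_cocols_iff[OF C(2)] coadjacent_cocols_iff[OF C(1)] adj co assms(3) by auto
qed

lemma adjacent_coadjacent_row_above_col_below:
  assumes adj: "adjacent R C y" and co: "coadjacent R' C' x" and "R' \<subseteq> R" "C \<subseteq> C'"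
  shows "(R' = {x, y} \<and> C' = L - {y}) \<or> (R' = {y} \<and> C' = L - {x, y})"
proof -
  interpret U: cut_chains L RR "(-) L ` CC" by (rule cut_chains_cocols)
  have C: "C \<in> CC" "C' \<in> CC" using adj co by (auto simp: adjacent_def coadjacent_def)
  have "C' \<subseteq> L" "x \<in> L" "y \<in> L" using C col_subset adjacent_point[OF adj] coadjacent_point[OF co]
    by auto
  moreover have "L - C' \<subseteq> L - C" using assms(4) by blast
  ultimately show ?thesis
    using U.adjacent_coadjacent_below[of R' "L - C'" x R "L - C" y]
      adjacent_cocols_iff[OF C(2)] coadjacent_cocols_iff[OF C(1)] adj co assms(3) by auto
qed

context
  fixes x y
  assumes bottom: "adjacent {x} {x, y} y"
begin

lemma bottom_facts: "{x} \<in> RR" "{x, y} \<in> CC" "x \<noteq> y" "x \<in> L" "y \<in> L"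
  using bottom col_subset[of "{x, y}"] by (auto simp: adjacent_def)

lemma adjacent_near_bottom:
  assumes co: "coadjacent R' C' x" "x \<in> R'" "{x, y} \<subseteq> C'" and adj: "adjacent R C w"
  shows "w \<in> {x, y} \<or> (R' = {x, w} \<and> C' = L - {w})"
proof -
  have RC: "R \<in> RR" "C \<in> CC" "R' \<in> RR" "C' \<in> CC"
    using adj co(1) by (auto simp: adjacent_def coadjacent_def)
  consider "R \<subseteq> R'" "C \<subseteq> C'" | "R \<subseteq> R'" "C' \<subseteq> C" | "R' \<subseteq> R" "C \<subseteq> C'" | "R' \<subseteq> R" "C' \<subseteq> C"
    using rows_nested[OF RC(1,3)] cols_nested[OF RC(2,4)] by blast
  then show ?thesis
  proof cases
    case 1
    from adjacent_coadjacent_below[OF adj co(1) 1]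
    consider "R = {x}" "C = {x, w}" | "R = {x, w}" "C = {x}" by blast
    then show ?thesis
    proof cases
      case 1
      then have "w \<noteq> x" using row_ne_col[OF RC(1,2)] by auto
      then have "C = {x, y}" using 1 bottom_facts col_eq[OF RC(2), of "{x, y}"] by simp
      then show ?thesis using 1 \<open>w \<noteq> x\<close> by (auto simp: doubleton_eq_iff)
    next
      case 2
      then show ?thesis using row_ne_col[OF bottom_facts(1) RC(2)] by simp
    qed
  next
    case 2
    then show ?thesis
      using adjacent_coadjacent_row_below_col_above[OF adj co(1) 2] co(2,3) bottom_facts(3) by auto
  next
    case 3
    then show ?thesis using adjacent_coadjacent_row_above_col_below[OF adj co(1) 3] co(3) by auto
  next
    case 4
    then show ?thesis using adjacent_coadjacent_above[OF adj co(1) 4] co(2) by auto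
  qed
qed

lemma coadjacent_near_bottom:
  assumes cadj: "coadjacent R C w"
  shows "w \<in> {x, y} \<or> (w \<noteq> y \<and> L - {w, y} \<in> RR)"
proof -
  have RC: "R \<in> RR" "C \<in> CC" "R \<noteq> {}" using cadj by (auto simp: coadjacent_def proper_def)
  have xR: "{x} \<subseteq> R" using rows_nested[OF RC(1) bottom_facts(1)] RC(3) by blast
  consider "{x, y} \<subseteq> C" | "C \<subseteq> {x, y}" using cols_nested[OF RC(2) bottom_facts(2)] by blast
  then show ?thesis
  proof cases
    case 1
    then show ?thesis using adjacent_coadjacent_below[OF bottom cadj xR 1] by auto
  next
    case 2
    then show ?thesis using adjacent_coadjacent_row_below_col_above[OF bottom cadj xR 2] RC(1)
      by auto
  qed
qed

lemma trivial_cut_near_bottom: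
  assumes RC: "R \<in> RR" "C \<in> CC" and iso: "isolates L R C w" "w \<in> L"
    and trivial: "\<not> (proper R \<and> proper C)"
  shows "w \<in> {x, y} \<or> (L - {w} \<in> RR \<and> ({} \<in> CC \<or> L \<in> CC)) \<or> (L - {w} \<in> CC \<and> ({} \<in> RR \<or> L \<in> RR))"
proof (cases "proper R")
  case True
  then have "C = {} \<or> C = L" using trivial by (simp add: proper_def)
  then have "R = {w} \<or> R = L - {w}" using iso row_subset[OF RC(1)] unfolding isolates_def by blast
  then show ?thesis using row_eq[OF bottom_facts(1), of "{w}"] RC \<open>C = {} \<or> C = L\<close> by auto
next
  case False
  then have "R = {} \<or> R = L" by (simp add: proper_def)
  then have "C = {w} \<or> C = L - {w}" using iso col_subset[OF RC(2)] unfolding isolates_def by blast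
  moreover have "C \<subseteq> {x, y}" if "C = {w}"
    using col_le[OF RC(2) bottom_facts(2)] that bottom_facts(3) by simp
  ultimately show ?thesis using RC \<open>R = {} \<or> R = L\<close> by auto
qed

end

lemma adjacent_level_bounds:
  assumes adj: "adjacent R C z"
  shows "1 \<le> level R C" "level R C + 2 \<le> card L"
proof -
  have RC: "R \<in> RR" "C \<in> CC" "R \<noteq> {}" "C \<noteq> {}" "R \<subset> L" "C \<subset> L"
    using adj row_subset col_subset by (auto simp: adjacent_def proper_def)
  then have "1 \<le> card R" "1 \<le> card C" "card R < card L" "card C < card L"
    using finite_row finite_col finite_L by (auto simp: Suc_le_eq card_gt_0_iff psubset_card_mono)
  moreover have "card C = Suc (card R) \<or> card R = Suc (card C)"
    using adj finite_row[OF RC(1)] finite_col[OF RC(2)] by (cases rule: adjacent_cases) auto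
  ultimately show "1 \<le> level R C" "level R C + 2 \<le> card L" unfolding level_def by auto
qed

lemma rising_falling_levels_differ:
  assumes adj: "adjacent R C z" "C = insert z R" "z \<notin> R"
    and adj': "adjacent R' C' z'" "R' = insert z' C'" "z' \<notin> C'"
  shows "card R \<noteq> card C'"
proof
  assume eq: "card R = card C'"
  have RC: "R \<in> RR" "C \<in> CC" "R' \<in> RR" "C' \<in> CC" using adj adj' by (auto simp: adjacent_def)
  have cards: "card C = Suc (card R)" "card R' = Suc (card C')"
    using adj adj' finite_row[OF RC(1)] finite_col[OF RC(4)] by auto
  have "R \<subseteq> R'" "C' \<subseteq> C" using row_le[OF RC(1,3)] col_le[OF RC(4,2)] cards eq by auto
  then have "R \<union> C' = R'" "R \<union> C' = C"
    using union_eq_of_card_Suc[of R' R C'] union_eq_of_card_Suc[of C R C'] adj(2) adj'(2)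
      finite_row[OF RC(3)] finite_col[OF RC(2)] row_ne_col[OF RC(1,4)] cards eq by auto
  then show False using row_ne_col[OF RC(3,2)] by simp
qed

lemma adjacent_unique_at_level:
  assumes adj: "adjacent R C z" and adj': "adjacent R' C' z'" and lev: "level R C = level R' C'"
  shows "R = R' \<and> C = C'"
proof -
  have RC: "R \<in> RR" "C \<in> CC" "R' \<in> RR" "C' \<in> CC" using adj adj' by (auto simp: adjacent_def)
  note fin = finite_row[OF RC(1)] finite_col[OF RC(2)] finite_row[OF RC(3)] finite_col[OF RC(4)]
  from adj show ?thesis
  proof (cases rule: adjacent_cases)
    case rising
    from adj' show ?thesis
    proof (cases rule: adjacent_cases)
      case rising': rising
      then show ?thesis using rising lev fin row_eq[OF RC(1,3)] col_eq[OF RC(2,4)]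
        by (simp add: level_def)
    next
      case falling': falling
      then show ?thesis
        using rising lev fin rising_falling_levels_differ[OF adj rising(2,1) adj' falling'(2,1)]
        by (simp add: level_def)
    qed
  next
    case falling
    from adj' show ?thesis
    proof (cases rule: adjacent_cases)
      case rising': rising
      then show ?thesis
        using falling lev fin rising_falling_levels_differ[OF adj' rising'(2,1) adj falling(2,1)]
        by (simp add: level_def)
    next
      case falling': falling
      then show ?thesis using falling lev fin row_eq[OF RC(1,3)] col_eq[OF RC(2,4)]
        by (simp add: level_def)
    qed
  qed
qed

(* Only meaningful at levels of adjacent pairs; elsewhere THE yields an arbitrary value. *)
definition level_point :: "nat \<Rightarrow> 'a" where
  "level_point s = (THE z. \<exists>R C. adjacent R C z \<and> level R C = s)"

lemma level_point_eq: "adjacent R C z \<Longrightarrow> level_point (level R C) = z"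
  unfolding level_point_def
proof (rule the_equality)
  fix z' assume "adjacent R C z" "\<exists>R' C'. adjacent R' C' z' \<and> level R' C' = level R C"
  then obtain R' C' where adj: "adjacent R' C' z'" "adjacent R C z" "level R C = level R' C'"
    by force
  then have "R' = R" "C' = C" using adjacent_unique_at_level[OF adj(2,1,3)] by auto
  then show "z' = z" using adj(1,2) unfolding adjacent_def by auto
qed blast

lemma adjacent_points_eq_image:
  "{z. \<exists>R C. adjacent R C z} = level_point ` {s. \<exists>R C z. adjacent R C z \<and> level R C = s}"
  using level_point_eq by force

lemma adjacent_levels_subset: "{s. \<exists>R C z. adjacent R C z \<and> level R C = s} \<subseteq> {1..card L - 2}"
  using adjacent_level_bounds by fastforce

definition rising_level :: "nat \<Rightarrow> bool" where
  "rising_level s \<longleftrightarrow> (\<exists>R C z. adjacent R C z \<and> level R C = s \<and> C = insert z R)"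

lemma rising_level_iff:
  assumes adj: "adjacent R C z"
  shows "rising_level (level R C) \<longleftrightarrow> C = insert z R"
proof
  assume "rising_level (level R C)"
  then obtain R' C' z' where adj': "adjacent R' C' z'" "level R' C' = level R C" "C' = insert z' R'"
    unfolding rising_level_def by blast
  then have "R' = R" "C' = C" using adjacent_unique_at_level[OF adj adj'(1)] by auto
  moreover have "z' = z" using level_point_eq[OF adj] level_point_eq[OF adj'(1)] adj'(2) by simp
  ultimately show "C = insert z R" using adj'(3) by simp
qed (use adj in \<open>auto simp: rising_level_def\<close>)

lemma rising_consecutive_same_point:
  assumes adj1: "adjacent R1 C1 z1" "C1 = insert z1 R1" "z1 \<notin> R1"
    and adj2: "adjacent R2 C2 z2" "C2 = insert z2 R2" "z2 \<notin> R2"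
    and lev: "card R2 = Suc (card R1)"
  shows "z1 = z2"
proof -
  have RC: "R1 \<in> RR" "C1 \<in> CC" "R2 \<in> RR" "C2 \<in> CC" using adj1 adj2 by (auto simp: adjacent_def)
  have cards: "card C1 = Suc (card R1)" "card C2 = Suc (card R2)"
    using adj1 adj2 finite_row[OF RC(1)] finite_row[OF RC(3)] by auto
  have "R1 \<subseteq> R2" "C1 \<subseteq> C2" using row_le[OF RC(1,3)] col_le[OF RC(2,4)] cards lev by auto
  then have "R2 \<union> C1 = C2"
    using union_eq_of_card_Suc[of C2 R2 C1] adj2(2) finite_col[OF RC(4)] row_ne_col[OF RC(3,2)]
      cards lev
    by auto
  then show ?thesis using adj1(2,3) adj2(2,3) \<open>R1 \<subseteq> R2\<close> by blast
qed

lemma rising_level_alternates: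
  assumes adj1: "adjacent R1 C1 z1" and adj2: "adjacent R2 C2 z2"
    and lev: "level R2 C2 = Suc (level R1 C1)" and "z1 \<noteq> z2"
  shows "rising_level (level R1 C1) \<longleftrightarrow> \<not> rising_level (level R2 C2)"
proof -
  interpret T: cut_chains L CC RR by (rule cut_chains_transposed)
  have RC: "R1 \<in> RR" "C1 \<in> CC" "R2 \<in> RR" "C2 \<in> CC" using adj1 adj2 by (auto simp: adjacent_def)
  note fin = finite_row[OF RC(1)] finite_col[OF RC(2)] finite_row[OF RC(3)] finite_col[OF RC(4)]
  have not_both_rising: False if "C1 = insert z1 R1" "z1 \<notin> R1" "C2 = insert z2 R2" "z2 \<notin> R2"
    using rising_consecutive_same_point[OF adj1 that(1,2) adj2 that(3,4)] lev that fin \<open>z1 \<noteq> z2\<close>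
    by (simp add: level_def)
  have not_both_falling: False if "R1 = insert z1 C1" "z1 \<notin> C1" "R2 = insert z2 C2" "z2 \<notin> C2"
    using T.rising_consecutive_same_point[of C1 R1 z1 C2 R2 z2] adj1 adj2 lev that fin \<open>z1 \<noteq> z2\<close>
    unfolding adjacent_transposed by (simp add: level_def)
  from adj1 have "C1 = insert z1 R1 \<longleftrightarrow> C2 \<noteq> insert z2 R2"
  proof (cases rule: adjacent_cases)
    case rising1: rising
    from adj2 show ?thesis by (cases rule: adjacent_cases) (use rising1 not_both_rising in blast)+
  next
    case falling1: falling
    from adj2 show ?thesis by (cases rule: adjacent_cases) (use falling1 not_both_falling in blast)+
  qed
  then show ?thesis unfolding rising_level_iff[OF adj1] rising_level_iff[OF adj2] .
qed

lemma bottom_level_rising: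
  assumes w: "{w} \<in> RR" "\<And>R C. \<not> adjacent R C w"
    and adj: "adjacent R C z" "level R C = 1"
  shows "C = insert z R"
  using adj(1)
proof (cases rule: adjacent_cases)
  case falling
  have RC: "R \<in> RR" "C \<in> CC" using adj(1) by (auto simp: adjacent_def)
  then have "card R = Suc (card C)" using falling finite_col by simp
  then have "card C = 1" using adj(2) by (simp add: level_def)
  then obtain c where c: "C = {c}" by (rule card_1_singletonE)
  have "{w} \<subseteq> R" using row_le[OF w(1) RC(1)] \<open>card R = Suc (card C)\<close> \<open>card C = 1\<close> by simp
  moreover have "w \<noteq> c" using row_ne_col[OF w(1) RC(2)] c by blast
  ultimately have "w = z" using falling c by blast
  then show ?thesis using w(2) adj(1) by blast
qed

lemma top_level_falling:
  assumes t: "L - {t} \<in> RR" "t \<in> L" "\<And>R C. \<not> adjacent R C t"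
    and adj: "adjacent R C z" "level R C = card L - 2"
  shows "C \<noteq> insert z R"
proof
  assume rising: "C = insert z R"
  have RC: "R \<in> RR" "C \<in> CC" using adj(1) by (auto simp: adjacent_def)
  have "z \<notin> R" "z \<in> L" using adj(1) adjacent_point rising by (auto simp: adjacent_def)
  then have cards: "card C = Suc (card R)" "card R = card L - 2" "card (L - {t}) = card L - 1"
    using rising adj(2) finite_row[OF RC(1)] finite_L t(2) by (auto simp: level_def)
  then have "2 \<le> card L" using adjacent_level_bounds(2)[OF adj(1)] adj(2) by linarith
  then have "R \<subseteq> L - {t}" using row_le[OF RC(1) t(1)] cards by simp
  moreover have "z \<noteq> t" using t(3) adj(1) by blast
  ultimately have "C \<subseteq> L - {t}" using rising \<open>z \<in> L\<close> by blast
  then have "C = L - {t}"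
    using cards \<open>2 \<le> card L\<close> finite_L by (intro card_subset_eq) auto
  then show False using row_ne_col[OF t(1) RC(2)] by simp
qed

end

locale isolating_cut_chains = cut_chains +
  assumes isolated: "x \<in> L \<Longrightarrow> \<exists>R\<in>RR. \<exists>C\<in>CC. isolates L R C x"
begin

lemma isolating_transposed: "isolating_cut_chains L CC RR"
proof (intro isolating_cut_chains.intro cut_chains_transposed isolating_cut_chains_axioms.intro)
  fix x assume "x \<in> L"
  then obtain R C where "R \<in> RR" "C \<in> CC" "isolates L R C x" using isolated by blast
  then show "\<exists>C\<in>CC. \<exists>R\<in>RR. isolates L C R x" using isolates_sym[of L C R x] by blast
qed

lemma isolating_complemented: "isolating_cut_chains L ((-) L ` RR) ((-) L ` CC)"
proof (intro isolating_cut_chains.intro cut_chains_complemented isolating_cut_chains_axioms.intro)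
  fix x assume "x \<in> L"
  then obtain R C where RC: "R \<in> RR" "C \<in> CC" "isolates L R C x" using isolated by blast
  then have "isolates L (L - R) (L - C) x"
    using sym_diff_compl_both[OF row_subset col_subset] unfolding isolates_def by simp
  then show "\<exists>R\<in>(-) L ` RR. \<exists>C\<in>(-) L ` CC. isolates L R C x" using RC(1,2) by blast
qed

lemma isolating_cocols: "isolating_cut_chains L RR ((-) L ` CC)"
proof (intro isolating_cut_chains.intro cut_chains_cocols isolating_cut_chains_axioms.intro)
  fix x assume x: "x \<in> L"
  then obtain R C where RC: "R \<in> RR" "C \<in> CC" "isolates L R C x" using isolated by blast
  have "sym_diff R (L - C) = L - sym_diff R C"
    using sym_diff_compl_right[OF row_subset col_subset] RC(1,2) .
  then have "isolates L R (L - C) x" using RC(3) x unfolding isolates_def by auto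
  then show "\<exists>R\<in>RR. \<exists>C\<in>(-) L ` CC. isolates L R C x" using RC(1,2) by blast
qed

lemma card_le_twice_card_rows:
  assumes "4 \<le> card L"
  shows "card L \<le> 2 * card RR"
proof -
  define E where "E R = {x \<in> L. \<exists>C\<in>CC. isolates L R C x}" for R
  have "finite RR" using finite_L row_subset by (meson Pow_iff finite_Pow_iff finite_subset subsetI)
  have "L \<subseteq> (\<Union>R\<in>RR. E R)" using isolated unfolding E_def by blast
  then have "card L \<le> card (\<Union>R\<in>RR. E R)"
    using \<open>finite RR\<close> finite_L by (intro card_mono) (auto simp: E_def)
  also have "\<dots> \<le> (\<Sum>R\<in>RR. card (E R))" using \<open>finite RR\<close> by (rule card_UN_le)
  also have "\<dots> \<le> (\<Sum>R\<in>RR. 2)"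
    using card_isolated_by_row_le_2[OF finite_L assms chain_cols col_subset row_subset]
    unfolding E_def by (intro sum_mono) blast
  finally show ?thesis by simp
qed

subsection \<open>Adjacent and coadjacent pairs exclude each other\<close>

lemma isolated_near_bottom:
  assumes bottom: "adjacent {x} {x, y} y"
    and co: "coadjacent R' C' x" "x \<in> R'" "{x, y} \<subseteq> C'" and w: "w \<in> L"
  shows "w \<in> {x, y} \<or> (R' = {x, w} \<and> C' = L - {w}) \<or> (w \<noteq> y \<and> L - {w, y} \<in> RR) \<or>
    (L - {w} \<in> RR \<and> ({} \<in> CC \<or> L \<in> CC)) \<or> (L - {w} \<in> CC \<and> ({} \<in> RR \<or> L \<in> RR))"
proof -
  obtain R C where RC: "R \<in> RR" "C \<in> CC" "isolates L R C w" using isolated w by blast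
  consider "adjacent R C w" | "coadjacent R C w" | "\<not> (proper R \<and> proper C)"
    using RC unfolding adjacent_def coadjacent_def isolates_def by blast
  then show ?thesis
  proof cases
    case 1
    then show ?thesis using adjacent_near_bottom[OF bottom co 1] by blast
  next
    case 2
    then show ?thesis using coadjacent_near_bottom[OF bottom 2] by blast
  next
    case 3
    then show ?thesis using trivial_cut_near_bottom[OF bottom RC w 3] by blast
  qed
qed

lemma card_le_4_of_bottom_adjacent:
  assumes bottom: "adjacent {x} {x, y} y"
    and co: "coadjacent R' C' x" "x \<in> R'" "{x, y} \<subseteq> C'"
  shows "card L \<le> 4"
proof -
  define Z where "Z = {z \<in> L. R' = {x, z} \<and> C' = L - {z}}"
  define A where "A = {z \<in> L. z \<noteq> y \<and> L - {z, y} \<in> RR}"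
  define Tr where "Tr = {t \<in> L. L - {t} \<in> RR \<and> ({} \<in> CC \<or> L \<in> CC)}"
  define Tc where "Tc = {t \<in> L. L - {t} \<in> CC \<and> ({} \<in> RR \<or> L \<in> RR)}"
  have xy: "x \<noteq> y" "y \<in> L" using bottom_facts[OF bottom] by auto
  have cover: "L \<subseteq> {x, y} \<union> Z \<union> A \<union> Tr \<union> Tc"
    using isolated_near_bottom[OF bottom co] by (auto simp: Z_def A_def Tr_def Tc_def)
  have fin: "finite Z" "finite A" "finite Tr" "finite Tc"
    using finite_L by (auto simp: Z_def A_def Tr_def Tc_def)
  have "Tr \<subseteq> {t \<in> L. L - {t} \<in> RR}" "Tc \<subseteq> {t \<in> L. L - {t} \<in> CC}" by (auto simp: Tr_def Tc_def)
  then have card: "card Z \<le> 1" "card A \<le> 1" "card Tr \<le> 1" "card Tc \<le> 1"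
    using order_trans[OF card_mono card_cosingleton_rows_le_1]
      order_trans[OF card_mono card_cosingleton_cols_le_1]
      card_codoubleton_rows_le_1[OF xy(2)] card_le_1_if_unique[OF fin(1)] finite_L
    by (auto simp: A_def Z_def)
  have Tr_Tc: "Tr = {} \<or> Tc = {}"
    using trivial_row_imp_proper_cols unfolding Tr_def Tc_def by blast
  have Tr_A: "Tr \<subseteq> A \<union> {y}" if "z \<in> A" for z
  proof
    fix t assume t: "t \<in> Tr"
    have "card (L - {z, y}) \<le> card (L - {t})"
      using that t xy finite_L by (auto simp: A_def Tr_def card_Diff_subset)
    then have "L - {z, y} \<subseteq> L - {t}" using that t row_le by (auto simp: A_def Tr_def)
    then show "t \<in> A \<union> {y}" using that t by (auto simp: Tr_def)
  qed
  have Tc_Z: "Tc \<subseteq> Z" if "z \<in> Z" for z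
    using that card_cosingleton_cols_le_1 co(1) finite_L
      card_le_Suc0_iff_eq[of "{t \<in> L. L - {t} \<in> CC}"]
    by (auto simp: Z_def Tc_def coadjacent_def)
  consider "L \<subseteq> {x, y} \<union> A \<union> Tc" | "L \<subseteq> {x, y} \<union> Z \<union> A" | "L \<subseteq> {x, y} \<union> Z \<union> Tr"
  proof (cases "Tr = {}")
    case True
    then show ?thesis using that cover Tc_Z by (cases "Z = {}") blast+
  next
    case False
    then show ?thesis using that cover Tr_A Tr_Tc by (cases "A = {}") blast+
  qed
  then show ?thesis
    by cases (use card_le_4_of_cover fin card in metis)+
qed

lemma card_le_4_of_adjacent_below_coadjacent:
  assumes adj: "adjacent R C y" and co: "coadjacent R' C' x" and "R \<subseteq> R'" "C \<subseteq> C'"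
  shows "card L \<le> 4"
proof -
  interpret T: isolating_cut_chains L CC RR by (rule isolating_transposed)
  from adjacent_coadjacent_below[OF adj co assms(3,4)]
  consider "R = {x}" "C = {x, y}" | "R = {x, y}" "C = {x}" by blast
  then show ?thesis
  proof cases
    case 1
    then show ?thesis using card_le_4_of_bottom_adjacent[of x y R' C'] adj co assms(3,4) by simp
  next
    case 2
    then show ?thesis
      using T.card_le_4_of_bottom_adjacent[of x y C' R'] adj co assms(3,4)
      unfolding adjacent_transposed coadjacent_transposed by simp
  qed
qed

lemma card_le_4_of_adjacent_above_coadjacent:
  assumes adj: "adjacent R C y" and co: "coadjacent R' C' x" and "R' \<subseteq> R" "C' \<subseteq> C"
  shows "card L \<le> 4"
proof -
  interpret K: isolating_cut_chains L "(-) L ` RR" "(-) L ` CC" by (rule isolating_complemented)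
  show ?thesis
    using K.card_le_4_of_adjacent_below_coadjacent[OF adjacent_complemented[OF adj]
        coadjacent_complemented[OF co]] assms(3,4) by blast
qed

lemma card_le_4_of_adjacent_and_coadjacent:
  assumes adj: "adjacent R C y" and co: "coadjacent R' C' x"
  shows "card L \<le> 4"
proof -
  interpret U: isolating_cut_chains L RR "(-) L ` CC" by (rule isolating_cocols)
  have RC: "R \<in> RR" "C \<in> CC" "R' \<in> RR" "C' \<in> CC"
    using adj co by (auto simp: adjacent_def coadjacent_def)
  have adj': "U.coadjacent R (L - C) y" using adj coadjacent_cocols_iff[OF RC(2)] by blast
  have co': "U.adjacent R' (L - C') x" using co adjacent_cocols_iff[OF RC(4)] by blast
  consider "R \<subseteq> R'" "C \<subseteq> C'" | "R \<subseteq> R'" "C' \<subseteq> C" | "R' \<subseteq> R" "C \<subseteq> C'" | "R' \<subseteq> R" "C' \<subseteq> C"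
    using rows_nested[OF RC(1,3)] cols_nested[OF RC(2,4)] by blast
  then show ?thesis
  proof cases
    case 1
    then show ?thesis by (rule card_le_4_of_adjacent_below_coadjacent[OF adj co])
  next
    case 2
    then have "L - C \<subseteq> L - C'" by blast
    then show ?thesis using U.card_le_4_of_adjacent_above_coadjacent[OF co' adj' \<open>R \<subseteq> R'\<close>] by blast
  next
    case 3
    then have "L - C' \<subseteq> L - C" by blast
    then show ?thesis using U.card_le_4_of_adjacent_below_coadjacent[OF co' adj' \<open>R' \<subseteq> R\<close>] by blast
  next
    case 4
    then show ?thesis by (rule card_le_4_of_adjacent_above_coadjacent[OF adj co])
  qed
qed

subsection \<open>Parity\<close>

lemma isolated_without_coadjacent:
  assumes no_co: "\<And>R C z. \<not> coadjacent R C z" and rows: "{} \<notin> RR" "L \<notin> RR" and w: "w \<in> L"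
  shows "(\<exists>R C. adjacent R C w) \<or> {w} \<in> RR \<or> L - {w} \<in> RR"
proof -
  obtain R C where RC: "R \<in> RR" "C \<in> CC" "isolates L R C w" using isolated w by blast
  have "proper R" using rows RC(1) by (auto simp: proper_def)
  show ?thesis
  proof (cases "proper C")
    case True
    have "sym_diff R C = {w} \<or> sym_diff R C = L - {w}" using RC(3) by (simp add: isolates_def)
    then have "adjacent R C w \<or> coadjacent R C w"
      using RC(1,2) \<open>proper R\<close> True by (auto simp: adjacent_def coadjacent_def)
    then show ?thesis using no_co by blast
  next
    case False
    then have "C = {} \<or> C = L" by (simp add: proper_def)
    then have "R = {w} \<or> R = L - {w}" using RC(3) w row_subset[OF RC(1)] unfolding isolates_def
      by blast
    then show ?thesis using RC(1) by blast
  qed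
qed

lemma adjacent_pairs_at_all_levels:
  assumes no_co: "\<And>R C z. \<not> coadjacent R C z" and rows: "{} \<notin> RR" "L \<notin> RR" and "2 \<le> card L"
  obtains w t where "{w} \<in> RR" "\<And>R C. \<not> adjacent R C w"
    and "L - {t} \<in> RR" "t \<in> L" "\<And>R C. \<not> adjacent R C t"
    and "\<And>s. 1 \<le> s \<Longrightarrow> s + 2 \<le> card L \<Longrightarrow> \<exists>R C z. adjacent R C z \<and> level R C = s"
    and "inj_on level_point {1..card L - 2}"
proof -
  define P where "P = {z. \<exists>R C. adjacent R C z}"
  define Lev where "Lev = {s. \<exists>R C z. adjacent R C z \<and> level R C = s}"
  define A1 where "A1 = {w \<in> L. {w} \<in> RR}"
  define A2 where "A2 = {t \<in> L. L - {t} \<in> RR}"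
  have P: "P = level_point ` Lev" unfolding P_def Lev_def by (rule adjacent_points_eq_image)
  have Lev: "Lev \<subseteq> {1..card L - 2}" unfolding Lev_def by (rule adjacent_levels_subset)
  have fin: "finite Lev" "finite P" using finite_subset[OF Lev] P by auto
  have cover: "L \<subseteq> P \<union> A1 \<union> A2"
    using isolated_without_coadjacent[OF no_co rows] by (auto simp: P_def A1_def A2_def)
  have "card L \<le> card P + card A1 + card A2"
    using card_mono[OF _ cover] card_Un_le[of P A1] card_Un_le[of "P \<union> A1" A2] fin finite_L
    by (fastforce simp: A1_def A2_def)
  moreover have "card A1 \<le> 1" "card A2 \<le> 1"
    using card_singleton_rows_le_1 card_cosingleton_rows_le_1 by (simp_all add: A1_def A2_def)
  moreover have "card P \<le> card Lev" "card Lev \<le> card L - 2"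
    using P card_image_le[OF fin(1)] card_mono[OF _ Lev] by auto
  ultimately have cards: "card Lev = card L - 2" "card P = card Lev" "card A1 = 1" "card A2 = 1"
    using \<open>2 \<le> card L\<close> by linarith+
  obtain w t where A: "A1 = {w}" "A2 = {t}" using cards(3,4) by (metis card_1_singletonE)
  have too_small: False if "L \<subseteq> P \<union> {a}" for a
  proof -
    have "card L \<le> card P + 1" using card_mono[OF _ that] card_Un_le[of P "{a}"] fin(2) by fastforce
    then show False using cards \<open>2 \<le> card L\<close> by linarith
  qed
  have "w \<notin> P" "t \<notin> P" using too_small[of t] too_small[of w] cover A by blast+
  have Lev_eq: "Lev = {1..card L - 2}" using card_subset_eq[OF _ Lev] cards(1) by simp
  have "inj_on level_point Lev" using eq_card_imp_inj_on[OF fin(1)] P cards(2) by simp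
  show thesis
  proof (rule that)
    show "{w} \<in> RR" using A(1) by (auto simp: A1_def)
    show "L - {t} \<in> RR" "t \<in> L" using A(2) by (auto simp: A2_def)
    show "\<not> adjacent R C w" "\<not> adjacent R C t" for R C
      using \<open>w \<notin> P\<close> \<open>t \<notin> P\<close> by (auto simp: P_def)
    show "\<exists>R C z. adjacent R C z \<and> level R C = s" if "1 \<le> s" "s + 2 \<le> card L" for s
    proof -
      have "s \<in> Lev" using that Lev_eq by simp
      then show ?thesis by (simp add: Lev_def)
    qed
    show "inj_on level_point {1..card L - 2}" using \<open>inj_on level_point Lev\<close> Lev_eq by simp
  qed
qed

lemma even_card_of_no_coadjacent:
  assumes k5: "5 \<le> card L" and no_co: "\<And>R C z. \<not> coadjacent R C z" and rows: "{} \<notin> RR" "L \<notin> RR"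
  shows "even (card L)"
proof -
  have "2 \<le> card L" using k5 by simp
  obtain w t where w: "{w} \<in> RR" "\<And>R C. \<not> adjacent R C w"
    and t: "L - {t} \<in> RR" "t \<in> L" "\<And>R C. \<not> adjacent R C t"
    and full: "\<And>s. 1 \<le> s \<Longrightarrow> s + 2 \<le> card L \<Longrightarrow> \<exists>R C z. adjacent R C z \<and> level R C = s"
    and inj: "inj_on level_point {1..card L - 2}"
    using adjacent_pairs_at_all_levels[OF no_co rows \<open>2 \<le> card L\<close>] by blast
  have first: "rising_level 1"
  proof -
    obtain R C z where "adjacent R C z" "level R C = 1" using full[of 1] k5 by auto
    then show ?thesis using bottom_level_rising[OF w] rising_level_iff by metis
  qed
  have last: "\<not> rising_level (card L - 2)"
  proof -
    have "1 \<le> card L - 2" "card L - 2 + 2 \<le> card L" using k5 by auto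
    then obtain R C z where "adjacent R C z" "level R C = card L - 2" using full by blast
    then show ?thesis using top_level_falling[OF t] rising_level_iff by metis
  qed
  have step: "rising_level s \<longleftrightarrow> \<not> rising_level (Suc s)" if s: "1 \<le> s" "Suc s + 2 \<le> card L" for s
  proof -
    obtain R1 C1 z1 where adj1: "adjacent R1 C1 z1" "level R1 C1 = s" using full s by force
    obtain R2 C2 z2 where adj2: "adjacent R2 C2 z2" "level R2 C2 = Suc s" using full s by force
    have "s \<in> {1..card L - 2}" "Suc s \<in> {1..card L - 2}" using s by auto
    then have "level_point s \<noteq> level_point (Suc s)" using inj_onD[OF inj] by fastforce
    then have "z1 \<noteq> z2"
      using level_point_eq[OF adj1(1)] level_point_eq[OF adj2(1)] adj1(2) adj2(2) by simp
    then show ?thesis using rising_level_alternates[OF adj1(1) adj2(1)] adj1(2) adj2(2) by simp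
  qed
  have parity: "rising_level s \<longleftrightarrow> odd s" if "1 \<le> s" "s + 2 \<le> card L" for s
    using that
  proof (induction s)
    case (Suc s)
    then show ?case using first step[of s] by (cases "s = 0") auto
  qed simp
  have "even (card L - 2)" using parity[of "card L - 2"] last k5 by simp
  then show ?thesis using k5 by presburger
qed

lemma even_card_of_proper_rows:
  assumes k5: "5 \<le> card L" and rows: "{} \<notin> RR" "L \<notin> RR"
  shows "even (card L)"
proof (cases "\<exists>R C z. coadjacent R C z")
  case False
  then show ?thesis using even_card_of_no_coadjacent[OF k5 _ rows] by blast
next
  case True
  then obtain R' C' x where co: "coadjacent R' C' x" by blast
  interpret U: isolating_cut_chains L RR "(-) L ` CC" by (rule isolating_cocols)
  have "\<not> U.coadjacent R C z" for R C z
  proof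
    assume co': "U.coadjacent R C z"
    then obtain C0 where "C0 \<in> CC" "C = L - C0" by (auto simp: U.coadjacent_def)
    then have "adjacent R C0 z" using co' coadjacent_cocols_iff by blast
    then show False using card_le_4_of_adjacent_and_coadjacent[OF _ co] k5 by simp
  qed
  then show ?thesis using U.even_card_of_no_coadjacent[OF k5 _ rows] by blast
qed

lemma even_card:
  assumes "5 \<le> card L"
  shows "even (card L)"
proof (cases "{} \<in> RR \<or> L \<in> RR")
  case True
  interpret T: isolating_cut_chains L CC RR by (rule isolating_transposed)
  show ?thesis using T.even_card_of_proper_rows[OF assms] trivial_row_imp_proper_cols[OF True]
    by blast
next
  case False
  then show ?thesis using even_card_of_proper_rows[OF assms] by blast
qed

end

section \<open>Cuts of the grid\<close>

lemma separates_iff: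
  "separates w u v \<longleftrightarrow>
     \<bar>int (fst w) - int (fst u)\<bar> + \<bar>int (snd w) - int (snd u)\<bar> \<noteq>
     \<bar>int (fst w) - int (fst v)\<bar> + \<bar>int (snd w) - int (snd v)\<bar>"
  unfolding separates_def grid_dist_def by (simp add: abs_minus_commute eq_nat_nat_iff)

lemma separates_commute: "separates w v u = separates w u v"
  unfolding separates_def by auto

lemma separates_swap: "separates (prod.swap w) (prod.swap u) (prod.swap v) = separates w u v"
  unfolding separates_def grid_dist_def by (simp add: add.commute)

lemma swap_in_grid_vertices: "prod.swap u \<in> grid_vertices n m \<longleftrightarrow> u \<in> grid_vertices m n"
  unfolding grid_vertices_def by auto

lemma separates_antidiagonal_pair: "separates x (i, Suc j) (Suc i, j) \<longleftrightarrow> (fst x \<le> i) \<noteq> (snd x \<le> j)"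
  unfolding separates_iff by (cases "fst x \<le> i"; cases "snd x \<le> j") auto

lemma separates_diagonal_pair: "separates x (i, j) (Suc i, Suc j) \<longleftrightarrow> (fst x \<le> i) = (snd x \<le> j)"
  unfolding separates_iff by (cases "fst x \<le> i"; cases "snd x \<le> j") auto

lemma abs_diff_eq_iff:
  fixes b j1 j2 :: int
  shows "\<bar>b - j1\<bar> = \<bar>b - j2\<bar> \<longleftrightarrow> j1 = j2 \<or> 2 * b = j1 + j2"
  by (cases "b \<le> j1"; cases "b \<le> j2") auto

lemma separates_same_row_iff:
  assumes "j1 \<noteq> j2"
  shows "separates w (i, j1) (i, j2) \<longleftrightarrow> 2 * snd w \<noteq> j1 + j2"
proof -
  have "2 * int (snd w) = int j1 + int j2 \<longleftrightarrow> 2 * snd w = j1 + j2" by linarith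
  then show ?thesis using assms unfolding separates_iff by (simp add: abs_diff_eq_iff)
qed

(* The cut corner (i1, j1 + t - 1) lies halfway along a shortest path between the two vertices;
   on its diagonal quadrants the distances to them cannot balance. *)

lemma diagonal_cut_separates:
  fixes i1 i2 j1 j2 a b t :: int
  assumes "i1 < i2" "j1 < j2" "i2 - i1 \<le> j2 - j1"
    and "i2 - i1 + (j2 - j1) \<le> 2 * t" "2 * t \<le> i2 - i1 + (j2 - j1) + 1"
    and "(a \<le> i1) = (b < j1 + t)"
  shows "\<bar>a - i1\<bar> + \<bar>b - j1\<bar> \<noteq> \<bar>a - i2\<bar> + \<bar>b - j2\<bar>"
  using assms by (cases "a \<le> i1"; cases "a \<le> i2"; cases "b \<le> j1"; cases "b \<le> j2") linarith+

lemma antidiagonal_cut_separates: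
  fixes i1 i2 j1 j2 a b t :: int
  assumes "i1 < i2" "j2 < j1" "i2 - i1 \<le> j1 - j2"
    and "i2 - i1 + (j1 - j2) \<le> 2 * t" "2 * t \<le> i2 - i1 + (j1 - j2) + 1"
    and "(a \<le> i1) \<noteq> (b \<le> j1 - t)"
  shows "\<bar>a - i1\<bar> + \<bar>b - j1\<bar> \<noteq> \<bar>a - i2\<bar> + \<bar>b - j2\<bar>"
  using assms by (cases "a \<le> i1"; cases "a \<le> i2"; cases "b \<le> j1"; cases "b \<le> j2") linarith+

definition cut_separated :: "nat \<Rightarrow> nat \<Rightarrow> nat \<times> nat \<Rightarrow> nat \<times> nat \<Rightarrow> bool" where
  "cut_separated m n u v \<longleftrightarrow>
     (\<exists>i j. 1 \<le> i \<and> i < m \<and> 1 \<le> j \<and> j < n \<and>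
        ((\<forall>w. (fst w \<le> i) = (snd w \<le> j) \<longrightarrow> separates w u v) \<or>
         (\<forall>w. (fst w \<le> i) \<noteq> (snd w \<le> j) \<longrightarrow> separates w u v))) \<or>
     (\<exists>r. 1 < r \<and> r < m \<and> (\<forall>w. fst w \<noteq> r \<longrightarrow> separates w u v)) \<or>
     (\<exists>c. 1 < c \<and> c < n \<and> (\<forall>w. snd w \<noteq> c \<longrightarrow> separates w u v))"

lemma cut_separated_commute: "cut_separated m n v u = cut_separated m n u v"
  unfolding cut_separated_def separates_commute[of _ v u] ..

lemma all_separates_swap:
  "(\<forall>w. P w \<longrightarrow> separates w (prod.swap u) (prod.swap v)) \<longleftrightarrow>
   (\<forall>w. P (prod.swap w) \<longrightarrow> separates w u v)"
  by (metis separates_swap swap_swap)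

lemma cut_separated_swap:
  assumes "cut_separated n m (prod.swap u) (prod.swap v)"
  shows "cut_separated m n u v"
proof -
  consider (cut) i j where "1 \<le> i" "i < n" "1 \<le> j" "j < m"
      "(\<forall>w. (fst w \<le> j) = (snd w \<le> i) \<longrightarrow> separates w u v) \<or>
       (\<forall>w. (fst w \<le> j) \<noteq> (snd w \<le> i) \<longrightarrow> separates w u v)"
    | (col) c where "1 < c" "c < n" "\<forall>w. snd w \<noteq> c \<longrightarrow> separates w u v"
    | (row) r where "1 < r" "r < m" "\<forall>w. fst w \<noteq> r \<longrightarrow> separates w u v"
    using assms unfolding cut_separated_def all_separates_swap by (force simp: eq_commute)
  then show ?thesis
  proof cases
    case cut
    then show ?thesis unfolding cut_separated_def by (intro disjI1 exI[of _ j] exI[of _ i]) simp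
  qed (auto simp: cut_separated_def)
qed

lemma cut_separated_same_row:
  assumes "j1 \<noteq> j2" "1 \<le> j1" "j1 \<le> n" "1 \<le> j2" "j2 \<le> n" "2 \<le> m" "2 \<le> n"
  shows "cut_separated m n (i, j1) (i, j2)"
proof (cases "even (j1 + j2)")
  case True
  then obtain c where c: "j1 + j2 = 2 * c" by (rule evenE)
  have "1 < c" "c < n" using c assms(1-5) by (cases "j1 < j2"; linarith)+
  moreover have "separates w (i, j1) (i, j2)" if "snd w \<noteq> c" for w
    using that c separates_same_row_iff[OF assms(1)] by simp
  ultimately show ?thesis unfolding cut_separated_def by blast
next
  case False
  then have "separates w (i, j1) (i, j2)" for w
    using separates_same_row_iff[OF assms(1)] by (metis dvd_triv_left)
  then show ?thesis using assms(6,7) unfolding cut_separated_def by (intro disjI1 exI[of _ 1]) auto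
qed

lemma cut_separated_diagonal:
  assumes "i1 < i2" "j1 < j2" "i2 - i1 \<le> j2 - j1" "1 \<le> i1" "i2 \<le> m" "1 \<le> j1" "j2 \<le> n"
  shows "cut_separated m n (i1, j1) (i2, j2)"
proof -
  define t where "t = (i2 - i1 + (j2 - j1) + 1) div 2"
  have t: "i2 - i1 + (j2 - j1) \<le> 2 * t" "2 * t \<le> i2 - i1 + (j2 - j1) + 1" "1 \<le> t" "t \<le> j2 - j1"
    using assms(1-3) unfolding t_def by auto
  have "separates w (i1, j1) (i2, j2)" if "(fst w \<le> i1) = (snd w \<le> j1 + t - 1)" for w
  proof -
    have "(int (fst w) \<le> int i1) = (int (snd w) < int j1 + int t)" using that t(3) by auto
    then show ?thesis
      using diagonal_cut_separates[of "int i1" "int i2" "int j1" "int j2" "int t"] assms(1-3) t(1,2)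
      unfolding separates_iff by (simp add: of_nat_diff)
  qed
  moreover have "i1 < m" "1 \<le> j1 + t - 1" "j1 + t - 1 < n" using assms t by auto
  ultimately show ?thesis
    unfolding cut_separated_def using assms(4)
      by (intro disjI1 exI[of _ i1] exI[of _ "j1 + t - 1"]) auto
qed

lemma cut_separated_antidiagonal:
  assumes "i1 < i2" "j2 < j1" "i2 - i1 \<le> j1 - j2" "1 \<le> i1" "i2 \<le> m" "1 \<le> j2" "j1 \<le> n"
  shows "cut_separated m n (i1, j1) (i2, j2)"
proof -
  define t where "t = (i2 - i1 + (j1 - j2) + 1) div 2"
  have t: "i2 - i1 + (j1 - j2) \<le> 2 * t" "2 * t \<le> i2 - i1 + (j1 - j2) + 1" "1 \<le> t" "t \<le> j1 - j2"
    using assms(1-3) unfolding t_def by auto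
  have "separates w (i1, j1) (i2, j2)" if "(fst w \<le> i1) \<noteq> (snd w \<le> j1 - t)" for w
  proof -
    have "(int (fst w) \<le> int i1) \<noteq> (int (snd w) \<le> int j1 - int t)" using that t(4) assms(2) by auto
    then show ?thesis
      using antidiagonal_cut_separates[of "int i1" "int i2" "int j2" "int j1" "int t"]
        assms(1-3) t(1,2)
      unfolding separates_iff by (simp add: of_nat_diff)
  qed
  moreover have "i1 < m" "1 \<le> j1 - t" "j1 - t < n" using assms t by auto
  ultimately show ?thesis
    unfolding cut_separated_def using assms(4)
      by (intro disjI1 exI[of _ i1] exI[of _ "j1 - t"]) auto
qed

lemma cut_separated_row_dominated:
  assumes grid: "(i1, j1) \<in> grid_vertices m n" "(i2, j2) \<in> grid_vertices m n"
    and "(i1, j1) \<noteq> (i2, j2)" "2 \<le> m" "2 \<le> n"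
    and le: "i1 \<le> i2" "\<bar>int i2 - int i1\<bar> \<le> \<bar>int j2 - int j1\<bar>"
  shows "cut_separated m n (i1, j1) (i2, j2)"
proof -
  have bounds: "1 \<le> i1" "i2 \<le> m" "1 \<le> j1" "j1 \<le> n" "1 \<le> j2" "j2 \<le> n"
    using grid by (auto simp: grid_vertices_def)
  consider "i1 = i2" "j1 \<noteq> j2" | "i1 < i2" "j1 < j2" | "i1 < i2" "j2 < j1"
    using assms(3) le by fastforce
  then show ?thesis
  proof cases
    case 1
    then show ?thesis using cut_separated_same_row bounds assms(4,5) by simp
  next
    case 2
    then show ?thesis using cut_separated_diagonal bounds le by simp
  next
    case 3
    then show ?thesis using cut_separated_antidiagonal bounds le by simp
  qed
qed

lemma cut_separated_pair:
  assumes "u \<in> grid_vertices m n" "v \<in> grid_vertices m n" "u \<noteq> v" "2 \<le> m" "2 \<le> n"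
  shows "cut_separated m n u v"
proof -
  have dominated: "cut_separated m' n' u' v'"
    if "u' \<in> grid_vertices m' n'" "v' \<in> grid_vertices m' n'" "u' \<noteq> v'" "2 \<le> m'" "2 \<le> n'"
      "\<bar>int (fst v') - int (fst u')\<bar> \<le> \<bar>int (snd v') - int (snd u')\<bar>" for m' n' u' v'
  proof (cases "fst u' \<le> fst v'")
    case True
    then show ?thesis
      using cut_separated_row_dominated[of "fst u'" "snd u'" m' n' "fst v'" "snd v'"] that by simp
  next
    case False
    then have "cut_separated m' n' v' u'"
      using cut_separated_row_dominated[of "fst v'" "snd v'" m' n' "fst u'" "snd u'"] that
        by (simp add: abs_minus_commute)
    then show ?thesis by (simp add: cut_separated_commute)
  qed
  show ?thesis
  proof (cases "\<bar>int (fst v) - int (fst u)\<bar> \<le> \<bar>int (snd v) - int (snd u)\<bar>")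
    case True
    then show ?thesis using dominated assms by blast
  next
    case False
    then have "cut_separated n m (prod.swap u) (prod.swap v)"
      using dominated[of "prod.swap u" n m "prod.swap v"] assms swap_in_grid_vertices
      by (simp add: swap_inj_on inj_on_eq_iff)
    then show ?thesis by (rule cut_separated_swap)
  qed
qed

lemma finite_grid_vertices: "finite (grid_vertices m n)"
proof -
  have "grid_vertices m n \<subseteq> {1..m} \<times> {1..n}" unfolding grid_vertices_def by auto
  then show ?thesis using finite_subset by blast
qed

lemma landmark_set_finite: "landmark_set m n L \<Longrightarrow> finite L"
  unfolding landmark_set_def using finite_grid_vertices finite_subset by blast

lemma chain_threshold_sets:
  fixes f :: "'a \<Rightarrow> 'b::linorder"
  shows "chain\<^sub>\<subseteq> ((\<lambda>i. {x \<in> L. f x \<le> i}) ` I)"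
  unfolding chain_subset_def
proof (intro ballI)
  fix A B assume "A \<in> (\<lambda>i. {x \<in> L. f x \<le> i}) ` I" "B \<in> (\<lambda>i. {x \<in> L. f x \<le> i}) ` I"
  then obtain i i' where AB: "A = {x \<in> L. f x \<le> i}" "B = {x \<in> L. f x \<le> i'}" by blast
  show "A \<subseteq> B \<or> B \<subseteq> A"
  proof (cases "i \<le> i'")
    case True
    then have "A \<subseteq> B" unfolding AB by (auto intro: order.trans)
    then show ?thesis ..
  next
    case False
    then have "B \<subseteq> A" unfolding AB by (auto intro: order.trans)
    then show ?thesis ..
  qed
qed

definition row_cuts :: "nat \<Rightarrow> (nat \<times> nat) set \<Rightarrow> (nat \<times> nat) set set" where
  "row_cuts m L = (\<lambda>i. {x \<in> L. fst x \<le> i}) ` {1..<m}"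

definition col_cuts :: "nat \<Rightarrow> (nat \<times> nat) set \<Rightarrow> (nat \<times> nat) set set" where
  "col_cuts n L = (\<lambda>j. {x \<in> L. snd x \<le> j}) ` {1..<n}"

lemma landmark_cut_chains:
  assumes lmk: "landmark_set m n L"
  shows "cut_chains L (row_cuts m L) (col_cuts n L)"
proof unfold_locales
  show "finite L" using lmk by (rule landmark_set_finite)
  show "chain\<^sub>\<subseteq> (row_cuts m L)" "chain\<^sub>\<subseteq> (col_cuts n L)"
    unfolding row_cuts_def col_cuts_def by (rule chain_threshold_sets)+
  show "R \<subseteq> L" if "R \<in> row_cuts m L" for R using that by (auto simp: row_cuts_def)
  show "C \<subseteq> L" if "C \<in> col_cuts n L" for C using that by (auto simp: col_cuts_def)
  show "R \<noteq> C" "R \<noteq> L - C" if R: "R \<in> row_cuts m L" and C: "C \<in> col_cuts n L" for R C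
  proof -
    obtain i j where ij: "1 \<le> i" "i < m" "1 \<le> j" "j < n"
      and RC: "R = {x \<in> L. fst x \<le> i}" "C = {x \<in> L. snd x \<le> j}"
      using R C by (auto simp: row_cuts_def col_cuts_def)
    have sep: "\<exists>x\<in>L. separates x u v"
      if "u \<in> grid_vertices m n" "v \<in> grid_vertices m n" "u \<noteq> v" for u v
      using lmk that unfolding landmark_set_def by blast
    obtain x y where "x \<in> L" "separates x (i, Suc j) (Suc i, j)"
      and "y \<in> L" "separates y (i, j) (Suc i, Suc j)"
      using sep[of "(i, Suc j)" "(Suc i, j)"] sep[of "(i, j)" "(Suc i, Suc j)"] ij
      by (auto simp: grid_vertices_def)
    then show "R \<noteq> C" "R \<noteq> L - C"
      unfolding separates_antidiagonal_pair separates_diagonal_pair RC by blast+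
  qed
qed

lemma landmark_card_ge_2:
  assumes lmk: "landmark_set m n L" and "2 \<le> m" "2 \<le> n"
  shows "2 \<le> card L"
proof -
  have sep: "\<exists>x\<in>L. separates x u v"
    if "u \<in> grid_vertices m n" "v \<in> grid_vertices m n" "u \<noteq> v" for u v
    using lmk that unfolding landmark_set_def by blast
  obtain x y where "x \<in> L" "separates x (1, Suc 1) (Suc 1, 1)"
    and "y \<in> L" "separates y (1, 1) (Suc 1, Suc 1)"
    using sep[of "(1, Suc 1)" "(Suc 1, 1)"] sep[of "(1, 1)" "(Suc 1, Suc 1)"] assms(2,3)
    by (auto simp: grid_vertices_def)
  moreover from this have "x \<noteq> y" unfolding separates_antidiagonal_pair separates_diagonal_pair
    by blast
  ultimately have "card {x, y} \<le> card L" using landmark_set_finite[OF lmk] by (intro card_mono) auto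
  then show ?thesis using \<open>x \<noteq> y\<close> by simp
qed

lemma landmark_set_swap:
  assumes lmk: "landmark_set m n L"
  shows "landmark_set n m (prod.swap ` L)"
  unfolding landmark_set_def
proof (intro conjI ballI impI)
  show "prod.swap ` L \<subseteq> grid_vertices n m"
    using lmk swap_in_grid_vertices by (auto simp: landmark_set_def)
  fix u v assume "u \<in> grid_vertices n m" "v \<in> grid_vertices n m" "u \<noteq> v"
  then have "prod.swap u \<in> grid_vertices m n" "prod.swap v \<in> grid_vertices m n"
    "prod.swap u \<noteq> prod.swap v"
    using swap_in_grid_vertices[of u m n] swap_in_grid_vertices[of v m n]
      by (auto simp: swap_inj_on inj_on_eq_iff)
  then obtain x where "x \<in> L" "separates x (prod.swap u) (prod.swap v)"
    using lmk unfolding landmark_set_def by blast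
  then show "\<exists>x\<in>prod.swap ` L. separates x u v"
    using separates_swap[of x "prod.swap u" "prod.swap v"] by auto
qed

lemma minimal_landmark_set_swap:
  assumes min: "minimal_landmark_set m n L"
  shows "minimal_landmark_set n m (prod.swap ` L)"
  unfolding minimal_landmark_set_def
proof (intro conjI allI impI)
  show "landmark_set n m (prod.swap ` L)"
    using min landmark_set_swap by (auto simp: minimal_landmark_set_def)
  fix L' assume "L' \<subset> prod.swap ` L"
  then have "prod.swap ` L' \<subset> L" by (force simp: image_iff)
  then show "\<not> landmark_set n m L'"
    using min landmark_set_swap[of n m L'] by (auto simp: minimal_landmark_set_def)
qed

lemma card_swap: "card (prod.swap ` L) = card L"
  by (simp add: card_image swap_inj_on)

lemma minimal_landmark_isolated_or_collinear:
  assumes min: "minimal_landmark_set m n L" and "2 \<le> m" "2 \<le> n" and x: "x \<in> L"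
  shows "(\<exists>R\<in>row_cuts m L. \<exists>C\<in>col_cuts n L. isolates L R C x) \<or>
    (\<exists>r. 1 < r \<and> r < m \<and> (\<forall>w\<in>L - {x}. fst w = r)) \<or>
    (\<exists>c. 1 < c \<and> c < n \<and> (\<forall>w\<in>L - {x}. snd w = c))"
proof -
  have lmk: "landmark_set m n L" using min by (simp add: minimal_landmark_set_def)
  interpret cut_chains L "row_cuts m L" "col_cuts n L" by (rule landmark_cut_chains[OF lmk])
  have "\<not> landmark_set m n (L - {x})" using min x by (auto simp: minimal_landmark_set_def)
  then obtain u v where uv: "u \<in> grid_vertices m n" "v \<in> grid_vertices m n" "u \<noteq> v"
    and unsep: "\<And>w. w \<in> L - {x} \<Longrightarrow> \<not> separates w u v"
    using lmk unfolding landmark_set_def by blast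
  define R where "R i = {w \<in> L. fst w \<le> i}" for i
  define C where "C j = {w \<in> L. snd w \<le> j}" for j
  have RC: "R i \<in> row_cuts m L" "C j \<in> col_cuts n L" if "1 \<le> i" "i < m" "1 \<le> j" "j < n" for i j
    using that by (auto simp: R_def C_def row_cuts_def col_cuts_def)
  have sd: "sym_diff (R i) (C j) = {w \<in> L. (fst w \<le> i) \<noteq> (snd w \<le> j)}" for i j
    unfolding R_def C_def by (rule sym_diff_filter)
  from cut_separated_pair[OF uv assms(2,3)] show ?thesis
    unfolding cut_separated_def
  proof (elim disjE exE conjE)
    fix i j assume ij: "1 \<le> i" "i < m" "1 \<le> j" "j < n"
      and diag: "\<forall>w. (fst w \<le> i) = (snd w \<le> j) \<longrightarrow> separates w u v"
    have "L - {x} \<subseteq> sym_diff (R i) (C j)" using diag unsep unfolding sd by blast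
    then have "sym_diff (R i) (C j) = L - {x}"
      using sym_diff_row_col_ne_all[OF RC[OF ij]] unfolding sd by blast
    then show ?thesis using RC[OF ij] unfolding isolates_def by blast
  next
    fix i j assume ij: "1 \<le> i" "i < m" "1 \<le> j" "j < n"
      and offdiag: "\<forall>w. (fst w \<le> i) \<noteq> (snd w \<le> j) \<longrightarrow> separates w u v"
    have "sym_diff (R i) (C j) \<subseteq> {x}" using offdiag unsep unfolding sd by blast
    then have "sym_diff (R i) (C j) = {x}" using sym_diff_row_col_nonempty[OF RC[OF ij]] by blast
    then show ?thesis using RC[OF ij] unfolding isolates_def by blast
  qed (use unsep in blast)+
qed

lemma row_collinear_not_landmark:
  assumes "1 < r" "r < m" "1 \<le> n" "\<forall>w\<in>L. fst w = r"
  shows "\<not> landmark_set m n L"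
proof
  assume "landmark_set m n L"
  moreover have "(r - 1, 1) \<in> grid_vertices m n" "(r + 1, 1) \<in> grid_vertices m n"
    "(r - 1, 1) \<noteq> (r + 1, 1)"
    using assms(1-3) by (auto simp: grid_vertices_def)
  ultimately obtain w where "w \<in> L" "separates w (r - 1, 1) (r + 1, 1)"
    unfolding landmark_set_def by blast
  then show False using assms(1,4) unfolding separates_iff by auto
qed

lemma obtain_middle:
  fixes B :: "'a::linorder set"
  assumes "finite B" "3 \<le> card B"
  obtains lo b hi where "lo \<in> B" "b \<in> B" "hi \<in> B" "lo < b" "b < hi"
proof -
  have "B \<noteq> {}" using assms by auto
  have "\<not> B \<subseteq> {Min B, Max B}"
  proof
    assume "B \<subseteq> {Min B, Max B}"
    then have "card B \<le> card {Min B, Max B}" by (intro card_mono) auto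
    also have "\<dots> \<le> 2" by (simp add: card_insert_if)
    finally show False using assms(2) by simp
  qed
  then obtain b where b: "b \<in> B" "b \<noteq> Min B" "b \<noteq> Max B" by blast
  then have "Min B < b" "b < Max B" using assms(1)
    by (simp_all add: order.not_eq_order_implies_strict)
  then show thesis using that b(1) Min_in Max_in assms(1) \<open>B \<noteq> {}\<close> by blast
qed

(* Among three landmarks on row r, the one in the middle column is not isolated by any pair of
   cuts: no column cut puts it on one side and both others on the other side. *)

lemma minimal_landmark_not_row_collinear:
  assumes min: "minimal_landmark_set m n L" and m: "2 \<le> m" and n: "2 \<le> n" and four: "4 \<le> card L"
    and x: "x \<in> L" and r: "1 < r" "r < m" and row: "\<forall>w\<in>L - {x}. fst w = r"
  shows False
proof -
  have lmk: "landmark_set m n L" using min by (simp add: minimal_landmark_set_def)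
  have fin: "finite (L - {x})" using landmark_set_finite[OF lmk] by simp
  have "inj_on snd (L - {x})"
  proof (rule inj_onI)
    fix w w' assume "w \<in> L - {x}" "w' \<in> L - {x}" "snd w = snd w'"
    moreover from this have "fst w = fst w'" using row by simp
    ultimately show "w = w'" by (simp add: prod_eq_iff)
  qed
  then have "card (snd ` (L - {x})) = card (L - {x})" by (rule card_image)
  also have "\<dots> \<ge> 3" using four x fin by simp
  finally obtain lo b hi where "lo \<in> snd ` (L - {x})" "b \<in> snd ` (L - {x})" "hi \<in> snd ` (L - {x})"
    and order: "lo < b" "b < hi"
    using obtain_middle[of "snd ` (L - {x})"] fin by blast
  then obtain y1 y y2 where pts: "y1 \<in> L - {x}" "y \<in> L - {x}" "y2 \<in> L - {x}"
    and cols: "snd y1 = lo" "snd y = b" "snd y2 = hi" by blast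
  have rows: "fst y1 = r" "fst y = r" "fst y2 = r" using row pts by auto
  have ne: "y1 \<noteq> y" "y2 \<noteq> y" using cols order by auto
  have "y \<in> L" using pts(2) by simp
  from minimal_landmark_isolated_or_collinear[OF min m n this] show False
  proof (elim disjE bexE exE conjE)
    fix R C assume "R \<in> row_cuts m L" "C \<in> col_cuts n L" and iso: "isolates L R C y"
    then obtain i j where RC: "R = {w \<in> L. fst w \<le> i}" "C = {w \<in> L. snd w \<le> j}"
      by (auto simp: row_cuts_def col_cuts_def)
    have "(lo \<le> j) \<noteq> (b \<le> j)" "(hi \<le> j) \<noteq> (b \<le> j)"
      using isolates_other_point[OF iso, of y1] isolates_other_point[OF iso, of y2] pts ne rows cols
      unfolding RC sym_diff_filter by auto
    then show False using order by auto
  next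
    fix r' assume "\<forall>w\<in>L - {y}. fst w = r'"
    then have "\<forall>w\<in>L. fst w = r" using pts(1) ne(1) rows by (metis Diff_iff singletonD)
    then show False using row_collinear_not_landmark[OF r, of n L] n lmk by simp
  next
    fix c assume "\<forall>w\<in>L - {y}. snd w = c"
    then show False using pts ne cols order by auto
  qed
qed

lemma minimal_landmark_isolating_cut_chains:
  assumes min: "minimal_landmark_set m n L" and m: "2 \<le> m" and n: "2 \<le> n" and four: "4 \<le> card L"
  shows "isolating_cut_chains L (row_cuts m L) (col_cuts n L)"
proof (intro isolating_cut_chains.intro isolating_cut_chains_axioms.intro)
  show "cut_chains L (row_cuts m L) (col_cuts n L)"
    using min landmark_cut_chains by (auto simp: minimal_landmark_set_def)
  fix x assume x: "x \<in> L"
  have no_column: False if c: "1 < c" "c < n" "\<forall>w\<in>L - {x}. snd w = c" for c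
  proof -
    have "\<forall>w\<in>prod.swap ` L - {prod.swap x}. fst w = c"
    proof
      fix w assume "w \<in> prod.swap ` L - {prod.swap x}"
      then obtain w' where "w' \<in> L - {x}" "w = prod.swap w'" by auto
      then show "fst w = c" using c(3) by simp
    qed
    moreover have "4 \<le> card (prod.swap ` L)" "prod.swap x \<in> prod.swap ` L"
      using four x by (auto simp: card_swap)
    ultimately show False
      using minimal_landmark_not_row_collinear[OF minimal_landmark_set_swap[OF min] n m _ _ c(1,2)]
      by blast
  qed
  from minimal_landmark_isolated_or_collinear[OF min m n x]
  show "\<exists>R\<in>row_cuts m L. \<exists>C\<in>col_cuts n L. isolates L R C x"
    using minimal_landmark_not_row_collinear[OF min m n four x] no_column by blast
qed

lemma minimal_landmark_card_le_rows:
  assumes "minimal_landmark_set m n L" "2 \<le> m" "2 \<le> n" "4 \<le> card L"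
  shows "card L \<le> 2 * (m - 1)"
proof -
  interpret isolating_cut_chains L "row_cuts m L" "col_cuts n L"
    by (rule minimal_landmark_isolating_cut_chains[OF assms])
  have "card (row_cuts m L) \<le> m - 1"
    unfolding row_cuts_def using card_image_le[of "{1..<m}"] by fastforce
  then show ?thesis using card_le_twice_card_rows[OF assms(4)] by linarith
qed

lemma minimal_landmark_even_card:
  assumes "minimal_landmark_set m n L" "2 \<le> m" "2 \<le> n" "5 \<le> card L"
  shows "even (card L)"
proof -
  interpret isolating_cut_chains L "row_cuts m L" "col_cuts n L"
    using minimal_landmark_isolating_cut_chains assms by simp
  show ?thesis using even_card[OF assms(4)] .
qed

theorem mainTheorem3:
  fixes m n :: nat and L :: "(nat \<times> nat) set"
  assumes "m \<ge> 2" and "n \<ge> 2" and "minimal_landmark_set m n L"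
  shows "card L \<in> {2, 3} \<or> (even (card L) \<and> 4 \<le> card L \<and> card L \<le> 2 * min m n - 2)"
proof -
  have "2 \<le> card L"
    using landmark_card_ge_2 assms by (auto simp: minimal_landmark_set_def)
  moreover have "even (card L) \<and> card L \<le> 2 * min m n - 2" if "4 \<le> card L"
  proof -
    have "card L \<le> 2 * (m - 1)"
      using minimal_landmark_card_le_rows[OF assms(3,1,2) that] .
    moreover have "card L \<le> 2 * (n - 1)"
      using minimal_landmark_card_le_rows[OF minimal_landmark_set_swap[OF assms(3)] assms(2,1)] that
      by (simp add: card_swap)
    moreover have "even (card L)"
      using minimal_landmark_even_card[OF assms(3,1,2)] that by (cases "card L = 4") auto
    ultimately show ?thesis by (simp add: min_def) arith
  qed
  ultimately show ?thesis by auto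
qed

end
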